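(* Let $G$ be a trigraph containing a fence gadget $F$ attached to a set $S$ and satisfying the attachment rule in $G$. In any partial $4$-sequence from $G$, the first contraction involving a pair consisting of a vertex of $V(F)$ and a vertex of $V(F)\cup S$ can only occur after $S$ has been contracted into a single vertex (i.e., at the moment of that contraction, $S$ is contained in a single part).
   Context: A trigraph $G$ consists of a vertex set $V(G)$ and two disjoint sets of unordered pairs of distinct vertices: black edges and red edges; the red graph is formed by the red edges. Contracting two distinct vertices $u,v$ replaces them by a new vertex $w$ such that, for every other vertex $z$, $wz$ is black if $uz,vz$ are both black, a non-edge if both are non-edges, and red otherwise. A partial $d$-sequence from $G$ is a sequence of trigraphs starting at $G$, each obtained from the previous by one contraction, all of maximum red degree at most $d$. Each vertex $u$ of a later trigraph corresponds to the set $u(G)$ (its part) of vertices of $G$ merged into it; a contraction of $u,u'$ involves a pair $v,v'$ of vertices of $G$ if $v\in u(G),v'\in u'(G)$ or vice versa. A fence gadget is a trigraph $F$ on $A\cup B$, $A=\{a_1,\dots,a_6\}$, $B=\{b_1,\dots,b_6\}$, whose black edges are those of the cycles $a_1a_2a_3a_4a_5a_6a_1$ and $b_1b_2b_3b_4b_5b_6b_1$ together with $b_1a_6$, and whose red edges are $a_ib_i$ for $i\in[6]$ and $a_ib_{i+1}$ for $i\in[5]$. Inside a trigraph $G$, $F$ is attached to a nonempty set $S\subseteq V(G)\setminus V(F)$ if every vertex of $A$ is joined by a black edge to every vertex of $S$ and no vertex of $B$ is adjacent to a vertex of $S$. $F$ satisfies the attachment rule in $G$ if $V(F)$ is the vertex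 set of a connected component of the red graph of $G$ and there is a set $X\subseteq V(G)\setminus(V(F)\cup S)$ such that every vertex of $A$ has exactly $X\cup S$ as its set of neighbours outside $V(F)$, every vertex of $B$ has exactly $X$ as its set of neighbours outside $V(F)$ (all these edges black), and every vertex of $X$ is adjacent to every vertex of $S$. *)

theory Defs
  imports Main
begin

record 'a trigraph =
  verts :: "'a set"
  blk   :: "'a set set"
  red   :: "'a set set"

definition wf_trigraph :: "'a trigraph \<Rightarrow> bool" where
  "wf_trigraph G \<longleftrightarrow> finite (verts G)
     \<and> blk G \<subseteq> {{x, y} | x y. x \<in> verts G \<and> y \<in> verts G \<and> x \<noteq> y}
     \<and> red G \<subseteq> {{x, y} | x y. x \<in> verts G \<and> y \<in> verts G \<and> x \<noteq> y}
     \<and> blk G \<inter> red G = {}"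

definition red_degree :: "'a trigraph \<Rightarrow> 'a \<Rightarrow> nat" where
  "red_degree T x = card {z \<in> verts T. {x, z} \<in> red T}"

definition max_red_deg_le :: "'a trigraph \<Rightarrow> nat \<Rightarrow> bool" where
  "max_red_deg_le T d \<longleftrightarrow> (\<forall>x \<in> verts T. red_degree T x \<le> d)"

text \<open>Trigraphs of a contraction sequence from G are represented with vertices being
  their parts (sets of vertices of G). The initial trigraph is G with every vertex v
  renamed to its part {v}.\<close>

definition lift :: "'v trigraph \<Rightarrow> 'v set trigraph" where
  "lift G = \<lparr> verts = (\<lambda>x. {x}) ` verts G,
              blk = (\<lambda>e. (\<lambda>x. {x}) ` e) ` blk G,
              red = (\<lambda>e. (\<lambda>x. {x}) ` e) ` red G \<rparr>"

definition contract :: "'v set trigraph \<Rightarrow> 'v set \<Rightarrow> 'v set \<Rightarrow> 'v set trigraph" where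
  "contract T u v = \<lparr>
     verts = insert (u \<union> v) (verts T - {u, v}),
     blk = {e \<in> blk T. u \<notin> e \<and> v \<notin> e}
           \<union> {{u \<union> v, z} | z. z \<in> verts T - {u, v} \<and> {u, z} \<in> blk T \<and> {v, z} \<in> blk T},
     red = {e \<in> red T. u \<notin> e \<and> v \<notin> e}
           \<union> {{u \<union> v, z} | z. z \<in> verts T - {u, v}
                 \<and> ({u, z} \<in> blk T \<union> red T \<or> {v, z} \<in> blk T \<union> red T)
                 \<and> \<not> ({u, z} \<in> blk T \<and> {v, z} \<in> blk T)} \<rparr>"

definition run :: "'v trigraph \<Rightarrow> ('v set \<times> 'v set) list \<Rightarrow> 'v set trigraph" where
  "run G ps = foldl (\<lambda>T (u, v). contract T u v) (lift G) ps"

definition partial_seq :: "nat \<Rightarrow> 'v trigraph \<Rightarrow> ('v set \<times> 'v set) list \<Rightarrow> bool" where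
  "partial_seq d G ps \<longleftrightarrow>
     (\<forall>i < length ps. fst (ps ! i) \<in> verts (run G (take i ps))
                    \<and> snd (ps ! i) \<in> verts (run G (take i ps))
                    \<and> fst (ps ! i) \<noteq> snd (ps ! i))
   \<and> (\<forall>i \<le> length ps. max_red_deg_le (run G (take i ps)) d)"

definition involves :: "'v set \<times> 'v set \<Rightarrow> 'v \<Rightarrow> 'v \<Rightarrow> bool" where
  "involves p x y \<longleftrightarrow> (x \<in> fst p \<and> y \<in> snd p) \<or> (x \<in> snd p \<and> y \<in> fst p)"

definition fenceV :: "(nat \<Rightarrow> 'v) \<Rightarrow> (nat \<Rightarrow> 'v) \<Rightarrow> 'v set" where
  "fenceV a b = a ` {1..6} \<union> b ` {1..6}"

definition fence_black :: "(nat \<Rightarrow> 'v) \<Rightarrow> (nat \<Rightarrow> 'v) \<Rightarrow> 'v set set" where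
  "fence_black a b =
     {{a i, a (Suc i)} | i. i \<in> {1..5}} \<union> {{a 6, a 1}}
   \<union> {{b i, b (Suc i)} | i. i \<in> {1..5}} \<union> {{b 6, b 1}}
   \<union> {{b 1, a 6}}"

definition fence_red :: "(nat \<Rightarrow> 'v) \<Rightarrow> (nat \<Rightarrow> 'v) \<Rightarrow> 'v set set" where
  "fence_red a b =
     {{a i, b i} | i. i \<in> {1..6}} \<union> {{a i, b (Suc i)} | i. i \<in> {1..5}}"

definition contains_fence :: "'v trigraph \<Rightarrow> (nat \<Rightarrow> 'v) \<Rightarrow> (nat \<Rightarrow> 'v) \<Rightarrow> bool" where
  "contains_fence G a b \<longleftrightarrow>
     inj_on a {1..6} \<and> inj_on b {1..6} \<and> a ` {1..6} \<inter> b ` {1..6} = {}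
   \<and> fenceV a b \<subseteq> verts G
   \<and> {e \<in> blk G. e \<subseteq> fenceV a b} = fence_black a b
   \<and> {e \<in> red G. e \<subseteq> fenceV a b} = fence_red a b"

definition adjacent :: "'v trigraph \<Rightarrow> 'v \<Rightarrow> 'v \<Rightarrow> bool" where
  "adjacent G x y \<longleftrightarrow> {x, y} \<in> blk G \<union> red G"

definition fence_attached :: "'v trigraph \<Rightarrow> (nat \<Rightarrow> 'v) \<Rightarrow> (nat \<Rightarrow> 'v) \<Rightarrow> 'v set \<Rightarrow> bool" where
  "fence_attached G a b S \<longleftrightarrow>
     S \<noteq> {} \<and> S \<subseteq> verts G - fenceV a b
   \<and> (\<forall>i \<in> {1..6}. \<forall>s \<in> S. {a i, s} \<in> blk G)
   \<and> (\<forall>i \<in> {1..6}. \<forall>s \<in> S. \<not> adjacent G (b i) s)"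

definition red_rel :: "'v trigraph \<Rightarrow> ('v \<times> 'v) set" where
  "red_rel G = {(x, y). x \<in> verts G \<and> y \<in> verts G \<and> {x, y} \<in> red G}"

definition red_component :: "'v trigraph \<Rightarrow> 'v \<Rightarrow> 'v set" where
  "red_component G x = {y. (x, y) \<in> (red_rel G)\<^sup>*}"

definition attachment_rule :: "'v trigraph \<Rightarrow> (nat \<Rightarrow> 'v) \<Rightarrow> (nat \<Rightarrow> 'v) \<Rightarrow> 'v set \<Rightarrow> bool" where
  "attachment_rule G a b S \<longleftrightarrow>
     (\<exists>x \<in> fenceV a b. red_component G x = fenceV a b)
   \<and> (\<exists>X. X \<subseteq> verts G - (fenceV a b \<union> S)
       \<and> (\<forall>i \<in> {1..6}. {z \<in> verts G - fenceV a b. adjacent G (a i) z} = X \<union> S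
                        \<and> (\<forall>z \<in> X \<union> S. {a i, z} \<in> blk G))
       \<and> (\<forall>i \<in> {1..6}. {z \<in> verts G - fenceV a b. adjacent G (b i) z} = X
                        \<and> (\<forall>z \<in> X. {b i, z} \<in> blk G))
       \<and> (\<forall>x \<in> X. \<forall>s \<in> S. adjacent G x s))"

end

theory Submission
  imports Defs
begin

text \<open>Up to the first contraction involving a fence vertex x and a vertex y of the fence or of S,
  no part contains two vertices of the fence, nor a fence vertex together with a vertex of S.
  Let that contraction merge the parts u \<ni> x and u' \<ni> y while S still meets two parts.
  A part that contains a neighbour of u \<union> u' but is not black to all of u \<union> u' becomes a red
  neighbour of the new vertex. A finite check on the fence gives at least five such fence
  vertices when x and y lie on the same side of the fence or y \<in> S, and at least three when
  x \<in> A and y \<in> B (or vice versa); in the latter case the two parts meeting S are two more,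
  being black to the A-vertex and non-adjacent to the B-vertex. Either way the red degree
  exceeds 4.\<close>

section \<open>The fence gadget on indices\<close>

text \<open>Index k < 6 stands for a (k + 1) and index 6 \<le> k < 12 for b (k - 5); on indices the
  counting facts about the fence are decided by evaluation.\<close>

definition fence_vertex :: "(nat \<Rightarrow> 'v) \<Rightarrow> (nat \<Rightarrow> 'v) \<Rightarrow> nat \<Rightarrow> 'v" where
  "fence_vertex a b k = (if k < 6 then a (Suc k) else b (k - 5))"

definition fence_black_idx :: "(nat \<times> nat) list" where
  "fence_black_idx =
     [(0,1),(1,2),(2,3),(3,4),(4,5),(5,0),(6,7),(7,8),(8,9),(9,10),(10,11),(11,6),(6,5)]"

definition fence_red_idx :: "(nat \<times> nat) list" where
  "fence_red_idx = [(0,6),(1,7),(2,8),(3,9),(4,10),(5,11),(0,7),(1,8),(2,9),(3,10),(4,11)]"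

definition black_idx :: "nat \<Rightarrow> nat \<Rightarrow> bool" where
  "black_idx m n \<longleftrightarrow> (m, n) \<in> set fence_black_idx \<or> (n, m) \<in> set fence_black_idx"

definition adj_idx :: "nat \<Rightarrow> nat \<Rightarrow> bool" where
  "adj_idx m n \<longleftrightarrow> black_idx m n \<or> (m, n) \<in> set fence_red_idx \<or> (n, m) \<in> set fence_red_idx"

lemma fence_vertex_simps:
  "fence_vertex a b 0 = a 1" "fence_vertex a b 1 = a 2" "fence_vertex a b 2 = a 3"
  "fence_vertex a b 3 = a 4" "fence_vertex a b 4 = a 5" "fence_vertex a b 5 = a 6"
  "fence_vertex a b 6 = b 1" "fence_vertex a b 7 = b 2" "fence_vertex a b 8 = b 3"
  "fence_vertex a b 9 = b 4" "fence_vertex a b 10 = b 5" "fence_vertex a b 11 = b 6"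
  by (simp_all add: fence_vertex_def numeral_eq_Suc)

lemma pairs_Suc_1_5:
  "{{f i, g (Suc i)} | i. i \<in> {1..5::nat}} = {{f 1, g 2}, {f 2, g 3}, {f 3, g 4}, {f 4, g 5}, {f 5, g 6}}"
proof -
  have "{1..5::nat} = {1,2,3,4,5}" by auto
  then have "{{f i, g (Suc i)} | i. i \<in> {1..5::nat}} = (\<lambda>i. {f i, g (Suc i)}) ` {1,2,3,4,5}"
    by blast
  then show ?thesis by (simp add: numeral_eq_Suc)
qed

lemma pairs_1_6:
  "{{f i, g i} | i. i \<in> {1..6::nat}} = {{f 1, g 1}, {f 2, g 2}, {f 3, g 3}, {f 4, g 4}, {f 5, g 5}, {f 6, g 6}}"
proof -
  have "{1..6::nat} = {1,2,3,4,5,6}" by auto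
  then have "{{f i, g i} | i. i \<in> {1..6::nat}} = (\<lambda>i. {f i, g i}) ` {1,2,3,4,5,6}"
    by blast
  then show ?thesis by simp
qed

lemma fenceV_eq_image: "fenceV a b = fence_vertex a b ` {0..<12}"
proof -
  have "{1..6::nat} = {1,2,3,4,5,6}" by auto
  moreover have "{0..<12::nat} = {0,1,2,3,4,5,6,7,8,9,10,11}"
    by (simp add: numeral_eq_Suc atLeastLessThanSuc insert_commute)
  ultimately show ?thesis
    unfolding fenceV_def
    by (simp only: image_insert image_empty fence_vertex_simps Un_assoc Un_insert_left Un_empty_left)
qed

lemma fence_black_eq_image:
  "fence_black a b = (\<lambda>(p, q). {fence_vertex a b p, fence_vertex a b q}) ` set fence_black_idx"
  unfolding fence_black_def pairs_Suc_1_5 fence_black_idx_def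
  by (simp only: list.set image_insert image_empty fence_vertex_simps prod.case
      Un_assoc Un_insert_left Un_empty_left)

lemma fence_red_eq_image:
  "fence_red a b = (\<lambda>(p, q). {fence_vertex a b p, fence_vertex a b q}) ` set fence_red_idx"
  unfolding fence_red_def pairs_Suc_1_5 pairs_1_6 fence_red_idx_def
  by (simp only: list.set image_insert image_empty fence_vertex_simps prod.case
      Un_assoc Un_insert_left Un_empty_left)

lemma inj_on_fence_vertex:
  assumes "contains_fence G a b"
  shows "inj_on (fence_vertex a b) {0..<12}"
proof (rule inj_onI)
  fix m n assume m: "m \<in> {0..<12}" and n: "n \<in> {0..<12}"
    and eq: "fence_vertex a b m = fence_vertex a b n"
  have ia: "inj_on a {1..6}" and ib: "inj_on b {1..6}" and ab: "a ` {1..6} \<inter> b ` {1..6} = {}"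
    using assms unfolding contains_fence_def by auto
  have idx: "k < 6 \<Longrightarrow> Suc k \<in> {1..6}" "k \<in> {0..<12} \<Longrightarrow> \<not> k < 6 \<Longrightarrow> k - 5 \<in> {1..6}" for k :: nat
    by auto
  show "m = n"
  proof (cases "m < 6"; cases "n < 6")
    assume "m < 6" "n < 6"
    then show ?thesis using eq inj_onD[OF ia _ idx(1) idx(1)] by (simp add: fence_vertex_def)
  next
    assume "\<not> m < 6" "\<not> n < 6"
    then show ?thesis using eq inj_onD[OF ib _ idx(2)[OF m] idx(2)[OF n]] by (simp add: fence_vertex_def)
  next
    assume "m < 6" "\<not> n < 6"
    with eq have "a (Suc m) = b (n - 5)" by (simp add: fence_vertex_def)
    with ab idx(1)[of m] idx(2)[OF n] \<open>m < 6\<close> \<open>\<not> n < 6\<close> show ?thesis by blast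
  next
    assume "\<not> m < 6" "n < 6"
    with eq have "b (m - 5) = a (Suc n)" by (simp add: fence_vertex_def)
    with ab idx(2)[OF m] idx(1)[of n] \<open>\<not> m < 6\<close> \<open>n < 6\<close> show ?thesis by blast
  qed
qed

lemma doubleton_in_image_pairs_iff:
  assumes "inj_on f A" "m \<in> A" "n \<in> A" "\<forall>(p, q) \<in> set E. p \<in> A \<and> q \<in> A"
  shows "{f m, f n} \<in> (\<lambda>(p, q). {f p, f q}) ` set E \<longleftrightarrow> (m, n) \<in> set E \<or> (n, m) \<in> set E"
proof
  assume "{f m, f n} \<in> (\<lambda>(p, q). {f p, f q}) ` set E"
  then obtain p q where pq: "(p, q) \<in> set E" "{f m, f n} = {f p, f q}" by auto
  with assms have "(m = p \<and> n = q) \<or> (m = q \<and> n = p)"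
    by (auto simp: doubleton_eq_iff inj_on_eq_iff)
  with pq(1) show "(m, n) \<in> set E \<or> (n, m) \<in> set E" by auto
next
  assume "(m, n) \<in> set E \<or> (n, m) \<in> set E"
  then show "{f m, f n} \<in> (\<lambda>(p, q). {f p, f q}) ` set E"
    by (auto simp: insert_commute intro: rev_image_eqI)
qed

lemma
  assumes "contains_fence G a b" "m < 12" "n < 12"
  shows fence_vertex_blk_iff: "{fence_vertex a b m, fence_vertex a b n} \<in> blk G \<longleftrightarrow> black_idx m n"
    and fence_vertex_adj_iff:
      "{fence_vertex a b m, fence_vertex a b n} \<in> blk G \<union> red G \<longleftrightarrow> adj_idx m n"
proof -
  let ?e = "{fence_vertex a b m, fence_vertex a b n}"
  have "?e \<subseteq> fenceV a b"
    using assms(2,3) by (auto simp: fenceV_eq_image)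
  moreover have "{e \<in> blk G. e \<subseteq> fenceV a b} = fence_black a b"
    and "{e \<in> red G. e \<subseteq> fenceV a b} = fence_red a b"
    using assms(1) by (simp_all add: contains_fence_def)
  ultimately have "?e \<in> blk G \<longleftrightarrow> ?e \<in> fence_black a b" and "?e \<in> red G \<longleftrightarrow> ?e \<in> fence_red a b"
    by blast+
  moreover have "?e \<in> fence_black a b \<longleftrightarrow> black_idx m n"
    unfolding fence_black_eq_image black_idx_def
    by (rule doubleton_in_image_pairs_iff[OF inj_on_fence_vertex[OF assms(1)]])
      (use assms(2,3) in \<open>auto simp: fence_black_idx_def\<close>)
  moreover have "?e \<in> fence_red a b \<longleftrightarrow> (m, n) \<in> set fence_red_idx \<or> (n, m) \<in> set fence_red_idx"
    unfolding fence_red_eq_image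
    by (rule doubleton_in_image_pairs_iff[OF inj_on_fence_vertex[OF assms(1)]])
      (use assms(2,3) in \<open>auto simp: fence_red_idx_def\<close>)
  ultimately show "?e \<in> blk G \<longleftrightarrow> black_idx m n" and "?e \<in> blk G \<union> red G \<longleftrightarrow> adj_idx m n"
    by (auto simp: adj_idx_def)
qed

lemma
  assumes "fence_attached G a b S" "k < 12" "s \<in> S"
  shows fence_vertex_blk_attached: "k < 6 \<Longrightarrow> {fence_vertex a b k, s} \<in> blk G"
    and fence_vertex_not_adj_attached: "\<not> k < 6 \<Longrightarrow> {fence_vertex a b k, s} \<notin> blk G \<union> red G"
proof -
  show "k < 6 \<Longrightarrow> {fence_vertex a b k, s} \<in> blk G"
    using assms by (auto simp: fence_attached_def fence_vertex_def)
  have "\<not> k < 6 \<Longrightarrow> k - 5 \<in> {1..6}" using assms(2) by auto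
  then show "\<not> k < 6 \<Longrightarrow> {fence_vertex a b k, s} \<notin> blk G \<union> red G"
    using assms by (auto simp: fence_attached_def fence_vertex_def adjacent_def)
qed

lemma card_Collect_less_eq_length_filter: "card {f. f < k \<and> P f} = length (filter P [0..<k])"
proof -
  have "{f. f < k \<and> P f} = set (filter P [0..<k])" by auto
  moreover have "card (set (filter P [0..<k])) = length (filter P [0..<k])"
    by (rule distinct_card) simp
  ultimately show ?thesis by simp
qed

text \<open>An index f is counted when the fence vertex f is adjacent to the contracted pair but not
  black to all of it. In the second lemma the partner lies in S, which is black to all of A
  (f < 6) and non-adjacent to all of B.\<close>

lemma card_mixed_nbrs_idx_fence_pair:
  assumes "m < 12" "n < 12" "m \<noteq> n"
  shows "(if (m < 6) = (n < 6) then 5 else 3) \<le> card {f. f < 12 \<and> f \<noteq> m \<and> f \<noteq> n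
           \<and> (adj_idx m f \<or> adj_idx n f) \<and> (\<not> black_idx m f \<or> \<not> black_idx n f)}"
proof -
  have "\<forall>m \<in> set [0..<12]. \<forall>n \<in> set [0..<12]. m \<noteq> n \<longrightarrow>
      (if (m < 6) = (n < 6) then 5 else 3) \<le> length (filter (\<lambda>f. f \<noteq> m \<and> f \<noteq> n
        \<and> (adj_idx m f \<or> adj_idx n f) \<and> (\<not> black_idx m f \<or> \<not> black_idx n f)) [0..<12])"
    by code_simp
  with assms show ?thesis by (simp add: card_Collect_less_eq_length_filter)
qed

lemma card_mixed_nbrs_idx_fence_attached:
  assumes "m < 12"
  shows "5 \<le> card {f. f < 12 \<and> f \<noteq> m
           \<and> (adj_idx m f \<or> f < 6) \<and> (\<not> black_idx m f \<or> \<not> f < 6)}"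
proof -
  have "\<forall>m \<in> set [0..<12]. 5 \<le> length (filter (\<lambda>f. f \<noteq> m
      \<and> (adj_idx m f \<or> f < 6) \<and> (\<not> black_idx m f \<or> \<not> f < 6)) [0..<12])"
    by code_simp
  with assms show ?thesis by (simp add: card_Collect_less_eq_length_filter)
qed

section \<open>Quotient trigraphs\<close>

text \<open>After contractions a red edge between parts carries no information about G, so the
  invariant only records that black edges are sound and adjacency is complete.\<close>

definition quotient_trigraph :: "'v trigraph \<Rightarrow> 'v set trigraph \<Rightarrow> bool" where
  "quotient_trigraph G T \<longleftrightarrow> finite (verts T)
     \<and> (\<forall>U \<in> verts T. U \<noteq> {} \<and> U \<subseteq> verts G)
     \<and> (\<forall>U \<in> verts T. \<forall>V \<in> verts T. U \<noteq> V \<longrightarrow> U \<inter> V = {})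
     \<and> \<Union>(verts T) = verts G
     \<and> (\<forall>e \<in> blk T \<union> red T. e \<subseteq> verts T)
     \<and> (\<forall>U \<in> verts T. \<forall>V \<in> verts T. U \<noteq> V \<longrightarrow> {U, V} \<in> blk T \<longrightarrow>
          (\<forall>p \<in> U. \<forall>q \<in> V. {p, q} \<in> blk G))
     \<and> (\<forall>U \<in> verts T. \<forall>V \<in> verts T. U \<noteq> V \<longrightarrow>
          (\<forall>p \<in> U. \<forall>q \<in> V. {p, q} \<in> blk G \<union> red G \<longrightarrow> {U, V} \<in> blk T \<union> red T))"

lemma
  assumes "quotient_trigraph G T"
  shows quotient_finite: "finite (verts T)"
    and quotient_part_nonempty: "U \<in> verts T \<Longrightarrow> U \<noteq> {}"
    and quotient_part_subset: "U \<in> verts T \<Longrightarrow> U \<subseteq> verts G"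
    and quotient_parts_disjoint: "U \<in> verts T \<Longrightarrow> V \<in> verts T \<Longrightarrow> U \<noteq> V \<Longrightarrow> U \<inter> V = {}"
    and quotient_parts_cover: "\<Union>(verts T) = verts G"
    and quotient_edge_subset: "e \<in> blk T \<union> red T \<Longrightarrow> e \<subseteq> verts T"
    and quotient_blk_sound: "U \<in> verts T \<Longrightarrow> V \<in> verts T \<Longrightarrow> U \<noteq> V \<Longrightarrow> {U, V} \<in> blk T
      \<Longrightarrow> p \<in> U \<Longrightarrow> q \<in> V \<Longrightarrow> {p, q} \<in> blk G"
    and quotient_adj_complete: "U \<in> verts T \<Longrightarrow> V \<in> verts T \<Longrightarrow> U \<noteq> V
      \<Longrightarrow> p \<in> U \<Longrightarrow> q \<in> V \<Longrightarrow> {p, q} \<in> blk G \<union> red G \<Longrightarrow> {U, V} \<in> blk T \<union> red T"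
proof -
  note conj = assms[unfolded quotient_trigraph_def]
  show "finite (verts T)" using conj by auto
  show "U \<in> verts T \<Longrightarrow> U \<noteq> {}" "U \<in> verts T \<Longrightarrow> U \<subseteq> verts G"
    using conj by auto+
  show "U \<in> verts T \<Longrightarrow> V \<in> verts T \<Longrightarrow> U \<noteq> V \<Longrightarrow> U \<inter> V = {}" using conj by auto
  show "\<Union>(verts T) = verts G" using conj by auto
  show "e \<in> blk T \<union> red T \<Longrightarrow> e \<subseteq> verts T" using conj by auto
  show "U \<in> verts T \<Longrightarrow> V \<in> verts T \<Longrightarrow> U \<noteq> V \<Longrightarrow> {U, V} \<in> blk T
      \<Longrightarrow> p \<in> U \<Longrightarrow> q \<in> V \<Longrightarrow> {p, q} \<in> blk G"
    using conj by auto
  show "U \<in> verts T \<Longrightarrow> V \<in> verts T \<Longrightarrow> U \<noteq> V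
      \<Longrightarrow> p \<in> U \<Longrightarrow> q \<in> V \<Longrightarrow> {p, q} \<in> blk G \<union> red G \<Longrightarrow> {U, V} \<in> blk T \<union> red T"
    using conj by meson
qed

lemma quotient_lift:
  assumes "wf_trigraph G"
  shows "quotient_trigraph G (lift G)"
proof -
  have fin: "finite (verts G)"
    and edge: "\<And>e. e \<in> blk G \<union> red G \<Longrightarrow> \<exists>x y. e = {x, y} \<and> x \<in> verts G \<and> y \<in> verts G"
    using assms unfolding wf_trigraph_def by blast+
  have blk_lift: "{{p}, {q}} \<in> blk (lift G) \<longleftrightarrow> {p, q} \<in> blk G"
    and red_lift: "{{p}, {q}} \<in> red (lift G) \<longleftrightarrow> {p, q} \<in> red G" for p q
  proof -
    have "{{p}, {q}} = (\<lambda>x. {x}) ` e \<longleftrightarrow> {p, q} = e" if "e \<in> blk G \<union> red G" for e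
      using edge[OF that] by (auto simp: doubleton_eq_iff)
    then show "{{p}, {q}} \<in> blk (lift G) \<longleftrightarrow> {p, q} \<in> blk G"
      and "{{p}, {q}} \<in> red (lift G) \<longleftrightarrow> {p, q} \<in> red G"
      unfolding lift_def by auto
  qed
  have verts_lift: "verts (lift G) = (\<lambda>x. {x}) ` verts G"
    by (simp add: lift_def)
  have edges_lift: "e \<subseteq> verts (lift G)" if "e \<in> blk (lift G) \<union> red (lift G)" for e
    using that edge unfolding lift_def by fastforce
  have blk_sound: "{p, q} \<in> blk G" if "{{p}, {q}} \<in> blk (lift G)" for p q
    using that blk_lift by blast
  have adj_complete: "{{p}, {q}} \<in> blk (lift G) \<union> red (lift G)" if "{p, q} \<in> blk G \<union> red G" for p q
    using that blk_lift red_lift by blast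
  show ?thesis
    unfolding quotient_trigraph_def verts_lift
    using fin edges_lift blk_sound adj_complete by (auto simp: verts_lift)
qed

lemma verts_contract: "verts (contract T u v) = insert (u \<union> v) (verts T - {u, v})"
  and blk_contract: "blk (contract T u v) = {e \<in> blk T. u \<notin> e \<and> v \<notin> e}
        \<union> {{u \<union> v, z} | z. z \<in> verts T - {u, v} \<and> {u, z} \<in> blk T \<and> {v, z} \<in> blk T}"
  and red_contract: "red (contract T u v) = {e \<in> red T. u \<notin> e \<and> v \<notin> e}
        \<union> {{u \<union> v, z} | z. z \<in> verts T - {u, v}
              \<and> ({u, z} \<in> blk T \<union> red T \<or> {v, z} \<in> blk T \<union> red T)
              \<and> \<not> ({u, z} \<in> blk T \<and> {v, z} \<in> blk T)}"
  by (simp_all add: contract_def)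

context
  fixes G :: "'v trigraph" and T :: "'v set trigraph" and u v :: "'v set"
  assumes quot: "quotient_trigraph G T" and u: "u \<in> verts T" and v: "v \<in> verts T" and uv: "u \<noteq> v"
begin

lemma part_disjoint_merged: "z \<in> verts T - {u, v} \<Longrightarrow> z \<inter> (u \<union> v) = {}"
  using quotient_parts_disjoint[OF quot] u v by blast

lemma contract_blk_sound_merged:
  assumes z: "z \<in> verts T - {u, v}" and zb: "{u, z} \<in> blk T" "{v, z} \<in> blk T"
    and p: "p \<in> u \<union> v" and q: "q \<in> z"
  shows "{p, q} \<in> blk G"
  using p quotient_blk_sound[OF quot u _ _ zb(1) _ q] quotient_blk_sound[OF quot v _ _ zb(2) _ q] z
  by blast

lemma contract_blk_sound:
  assumes U: "U \<in> verts (contract T u v)" and V: "V \<in> verts (contract T u v)" and "U \<noteq> V"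
    and UV: "{U, V} \<in> blk (contract T u v)" and p: "p \<in> U" and q: "q \<in> V"
  shows "{p, q} \<in> blk G"
  using UV unfolding blk_contract
proof (elim UnE CollectE exE conjE)
  assume "{U, V} \<in> blk T"
  moreover from this have "U \<in> verts T" "V \<in> verts T"
    using quotient_edge_subset[OF quot] by blast+
  ultimately show ?thesis
    using quotient_blk_sound[OF quot] \<open>U \<noteq> V\<close> p q by blast
next
  fix z assume "{U, V} = {u \<union> v, z}" "z \<in> verts T - {u, v}" "{u, z} \<in> blk T" "{v, z} \<in> blk T"
  then show ?thesis
    using contract_blk_sound_merged[of z p q] contract_blk_sound_merged[of z q p] p q
    by (auto simp: doubleton_eq_iff insert_commute)
qed

lemma contract_adj_complete_merged:
  assumes z: "z \<in> verts T - {u, v}" and p: "p \<in> u \<union> v" and q: "q \<in> z"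
    and pq: "{p, q} \<in> blk G \<union> red G"
  shows "{u \<union> v, z} \<in> blk (contract T u v) \<union> red (contract T u v)"
proof -
  have "{u, z} \<in> blk T \<union> red T \<or> {v, z} \<in> blk T \<union> red T"
    using p z quotient_adj_complete[OF quot u _ _ _ q pq] quotient_adj_complete[OF quot v _ _ _ q pq]
    by blast
  then show ?thesis
    unfolding blk_contract red_contract using z by blast
qed

lemma contract_adj_complete:
  assumes U: "U \<in> verts (contract T u v)" and V: "V \<in> verts (contract T u v)" and "U \<noteq> V"
    and p: "p \<in> U" and q: "q \<in> V" and pq: "{p, q} \<in> blk G \<union> red G"
  shows "{U, V} \<in> blk (contract T u v) \<union> red (contract T u v)"
proof -
  consider "U = u \<union> v" | "V = u \<union> v" | "U \<in> verts T - {u, v}" "V \<in> verts T - {u, v}"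
    using U V unfolding verts_contract by blast
  then show ?thesis
  proof cases
    case 1
    with V \<open>U \<noteq> V\<close> have "V \<in> verts T - {u, v}"
      unfolding verts_contract by blast
    with 1 show ?thesis
      using contract_adj_complete_merged p q pq by blast
  next
    case 2
    with U \<open>U \<noteq> V\<close> have "U \<in> verts T - {u, v}"
      unfolding verts_contract by blast
    with 2 show ?thesis
      using contract_adj_complete_merged[of U q p] p q pq by (simp add: insert_commute)
  next
    case 3
    then show ?thesis
      using quotient_adj_complete[OF quot _ _ \<open>U \<noteq> V\<close> p q pq]
      unfolding blk_contract red_contract by blast
  qed
qed

lemma quotient_contract: "quotient_trigraph G (contract T u v)"
proof -
  let ?T = "contract T u v"
  have fin: "finite (verts ?T)"
    using quotient_finite[OF quot] by (simp add: verts_contract)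
  have parts: "\<forall>U \<in> verts ?T. U \<noteq> {} \<and> U \<subseteq> verts G"
    using u v quotient_part_nonempty[OF quot] quotient_part_subset[OF quot]
    unfolding verts_contract by blast
  have disjoint: "\<forall>U \<in> verts ?T. \<forall>V \<in> verts ?T. U \<noteq> V \<longrightarrow> U \<inter> V = {}"
  proof (intro ballI impI)
    fix U V assume U: "U \<in> verts ?T" and V: "V \<in> verts ?T" and "U \<noteq> V"
    then consider "U = u \<union> v" "V \<in> verts T - {u, v}" | "V = u \<union> v" "U \<in> verts T - {u, v}"
      | "U \<in> verts T" "V \<in> verts T"
      unfolding verts_contract by blast
    then show "U \<inter> V = {}"
    proof cases
      case 1
      then show ?thesis using part_disjoint_merged[of V] by (simp add: Int_commute)
    next
      case 2
      then show ?thesis using part_disjoint_merged[of U] by simp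
    next
      case 3
      then show ?thesis using quotient_parts_disjoint[OF quot _ _ \<open>U \<noteq> V\<close>] by simp
    qed
  qed
  have "\<Union>(verts ?T) = \<Union>(verts T)"
    using u v unfolding verts_contract by auto
  then have cover: "\<Union>(verts ?T) = verts G"
    using quotient_parts_cover[OF quot] by simp
  have edges: "\<forall>e \<in> blk ?T \<union> red ?T. e \<subseteq> verts ?T"
    using quotient_edge_subset[OF quot] unfolding verts_contract blk_contract red_contract
    by blast
  have blk_sound: "\<forall>U \<in> verts ?T. \<forall>V \<in> verts ?T. U \<noteq> V \<longrightarrow> {U, V} \<in> blk ?T \<longrightarrow>
      (\<forall>p \<in> U. \<forall>q \<in> V. {p, q} \<in> blk G)"
    using contract_blk_sound by blast
  have adj_complete: "\<forall>U \<in> verts ?T. \<forall>V \<in> verts ?T. U \<noteq> V \<longrightarrow>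
      (\<forall>p \<in> U. \<forall>q \<in> V. {p, q} \<in> blk G \<union> red G \<longrightarrow> {U, V} \<in> blk ?T \<union> red ?T)"
    using contract_adj_complete by blast
  show ?thesis
    unfolding quotient_trigraph_def
    using fin parts disjoint cover edges blk_sound adj_complete by (intro conjI)
qed

end

section \<open>Contraction sequences\<close>

lemma run_take_Suc:
  assumes "k < length ps"
  shows "run G (take (Suc k) ps) = contract (run G (take k ps)) (fst (ps ! k)) (snd (ps ! k))"
  using assms by (simp add: run_def take_Suc_conv_app_nth split_beta)

lemma partial_seq_contracted:
  assumes "partial_seq d G ps" "k < length ps"
  shows "fst (ps ! k) \<in> verts (run G (take k ps))" "snd (ps ! k) \<in> verts (run G (take k ps))"
    "fst (ps ! k) \<noteq> snd (ps ! k)"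
  using assms unfolding partial_seq_def by blast+

lemma quotient_run:
  assumes "wf_trigraph G" "partial_seq d G ps" "k \<le> length ps"
  shows "quotient_trigraph G (run G (take k ps))"
  using assms(3)
proof (induction k)
  case 0
  then show ?case using quotient_lift[OF assms(1)] by (simp add: run_def)
next
  case (Suc k)
  then have k: "k < length ps" by simp
  with Suc have "quotient_trigraph G (contract (run G (take k ps)) (fst (ps ! k)) (snd (ps ! k)))"
    using quotient_contract partial_seq_contracted[OF assms(2) k] by simp
  then show ?case by (simp add: run_take_Suc[OF k])
qed

definition parts_separate :: "'v set \<Rightarrow> 'v set \<Rightarrow> 'v set trigraph \<Rightarrow> bool" where
  "parts_separate F S T \<longleftrightarrow> (\<forall>U \<in> verts T. \<forall>x \<in> U. \<forall>y \<in> U. x \<in> F \<longrightarrow> y \<in> F \<union> S \<longrightarrow> x = y)"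

lemma parts_separateD:
  assumes "parts_separate F S T" "U \<in> verts T" "x \<in> U" "y \<in> U" "x \<in> F" "y \<in> F \<union> S"
  shows "x = y"
  using assms unfolding parts_separate_def by blast

lemma parts_separate_contract:
  assumes sep: "parts_separate F S T" and u: "u \<in> verts T" and v: "v \<in> verts T"
    and "\<not> (\<exists>x \<in> F. \<exists>y \<in> F \<union> S. involves (u, v) x y)"
  shows "parts_separate F S (contract T u v)"
  unfolding parts_separate_def
proof (intro ballI impI)
  fix U x y assume U: "U \<in> verts (contract T u v)" and "x \<in> U" "y \<in> U" "x \<in> F" "y \<in> F \<union> S"
  moreover have "\<not> involves (u, v) x y"
    using assms(4) \<open>x \<in> F\<close> \<open>y \<in> F \<union> S\<close> by blast
  ultimately have "x \<in> u \<and> y \<in> u \<or> x \<in> v \<and> y \<in> v \<or> U \<in> verts T \<and> x \<in> U \<and> y \<in> U"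
    by (auto simp: verts_contract involves_def)
  then show "x = y"
    using sep u v \<open>x \<in> F\<close> \<open>y \<in> F \<union> S\<close> unfolding parts_separate_def by blast
qed

lemma parts_separate_run:
  assumes "partial_seq d G ps" "k \<le> i" "i < length ps"
    and "\<forall>j < i. \<not> (\<exists>x \<in> F. \<exists>y \<in> F \<union> S. involves (ps ! j) x y)"
  shows "parts_separate F S (run G (take k ps))"
  using assms(2)
proof (induction k)
  case 0
  then show ?case by (auto simp: run_def lift_def parts_separate_def)
next
  case (Suc k)
  then have k: "k < length ps" "k < i" using assms(3) by simp_all
  have "parts_separate F S (contract (run G (take k ps)) (fst (ps ! k)) (snd (ps ! k)))"
  proof (rule parts_separate_contract)
    show "parts_separate F S (run G (take k ps))" using Suc by simp
    show "fst (ps ! k) \<in> verts (run G (take k ps))" "snd (ps ! k) \<in> verts (run G (take k ps))"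
      using partial_seq_contracted[OF assms(1) k(1)] by simp_all
    show "\<not> (\<exists>x \<in> F. \<exists>y \<in> F \<union> S. involves (fst (ps ! k), snd (ps ! k)) x y)"
      using assms(4) k(2) by simp
  qed
  then show ?case by (simp add: run_take_Suc[OF k(1)])
qed

section \<open>Red neighbours of a contracted pair\<close>

definition part_of :: "'v set trigraph \<Rightarrow> 'v \<Rightarrow> 'v set" where
  "part_of T p = (THE U. U \<in> verts T \<and> p \<in> U)"

lemma part_of_eq:
  assumes "quotient_trigraph G T" "U \<in> verts T" "p \<in> U"
  shows "part_of T p = U"
  unfolding part_of_def
  using assms quotient_parts_disjoint[OF assms(1)] by (intro the_equality) blast+

lemma
  assumes "quotient_trigraph G T" "p \<in> verts G"
  shows part_of_in_verts: "part_of T p \<in> verts T" and mem_part_of: "p \<in> part_of T p"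
proof -
  obtain U where "U \<in> verts T" "p \<in> U"
    using assms quotient_parts_cover[OF assms(1)] by blast
  then show "part_of T p \<in> verts T" "p \<in> part_of T p"
    using part_of_eq[OF assms(1)] by simp_all
qed

definition merge_red_nbrs :: "'v set trigraph \<Rightarrow> 'v set \<Rightarrow> 'v set \<Rightarrow> 'v set set" where
  "merge_red_nbrs T u v = {z \<in> verts T - {u, v}.
     ({u, z} \<in> blk T \<union> red T \<or> {v, z} \<in> blk T \<union> red T) \<and> \<not> ({u, z} \<in> blk T \<and> {v, z} \<in> blk T)}"

lemma merge_red_nbrs_commute: "merge_red_nbrs T u v = merge_red_nbrs T v u"
  unfolding merge_red_nbrs_def by blast

lemma card_merge_red_nbrs_le_red_degree:
  assumes "finite (verts T)"
  shows "card (merge_red_nbrs T u v) \<le> red_degree (contract T u v) (u \<union> v)"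
  unfolding red_degree_def
proof (rule card_mono)
  show "finite {z \<in> verts (contract T u v). {u \<union> v, z} \<in> red (contract T u v)}"
    using assms by (simp add: verts_contract)
  show "merge_red_nbrs T u v \<subseteq> {z \<in> verts (contract T u v). {u \<union> v, z} \<in> red (contract T u v)}"
    unfolding merge_red_nbrs_def verts_contract red_contract by blast
qed

lemma card_merge_red_nbrs_le_of_partial_seq:
  assumes "partial_seq d G ps" "i < length ps" "ps ! i = (u, v)"
    and "finite (verts (run G (take i ps)))"
  shows "card (merge_red_nbrs (run G (take i ps)) u v) \<le> d"
proof -
  let ?T = "run G (take i ps)"
  have "max_red_deg_le (run G (take (Suc i) ps)) d"
    using assms(1,2) unfolding partial_seq_def by simp
  then have "max_red_deg_le (contract ?T u v) d"
    using run_take_Suc[OF assms(2)] assms(3) by simp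
  then have "red_degree (contract ?T u v) (u \<union> v) \<le> d"
    unfolding max_red_deg_le_def by (simp add: verts_contract)
  then show ?thesis
    using card_merge_red_nbrs_le_red_degree[OF assms(4), of u v] by linarith
qed

definition mixed_nbr :: "'v trigraph \<Rightarrow> 'v set \<Rightarrow> 'v \<Rightarrow> bool" where
  "mixed_nbr G U w \<longleftrightarrow> (\<exists>p \<in> U. {p, w} \<in> blk G \<union> red G) \<and> (\<exists>p \<in> U. {p, w} \<notin> blk G)"

lemma part_of_in_merge_red_nbrs:
  assumes quot: "quotient_trigraph G T" and u: "u \<in> verts T" and v: "v \<in> verts T"
    and w: "w \<in> verts G" "part_of T w \<notin> {u, v}" and mixed: "mixed_nbr G (u \<union> v) w"
  shows "part_of T w \<in> merge_red_nbrs T u v"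
proof -
  let ?z = "part_of T w"
  have z: "?z \<in> verts T" "w \<in> ?z"
    using part_of_in_verts[OF quot w(1)] mem_part_of[OF quot w(1)] .
  obtain p1 p2 where p: "p1 \<in> u \<union> v" "{p1, w} \<in> blk G \<union> red G" "p2 \<in> u \<union> v" "{p2, w} \<notin> blk G"
    using mixed unfolding mixed_nbr_def by blast
  have "{u, ?z} \<in> blk T \<union> red T \<or> {v, ?z} \<in> blk T \<union> red T"
    using p(1,2) w(2) quotient_adj_complete[OF quot u z(1) _ _ z(2)]
      quotient_adj_complete[OF quot v z(1) _ _ z(2)] by blast
  moreover have "\<not> ({u, ?z} \<in> blk T \<and> {v, ?z} \<in> blk T)"
    using p(3,4) w(2) quotient_blk_sound[OF quot u z(1) _ _ _ z(2)]
      quotient_blk_sound[OF quot v z(1) _ _ _ z(2)] by blast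
  ultimately show ?thesis
    unfolding merge_red_nbrs_def using z(1) w(2) by blast
qed

lemma card_le_merge_red_nbrs:
  assumes quot: "quotient_trigraph G T" and u: "u \<in> verts T" and v: "v \<in> verts T"
    and W: "W \<subseteq> verts G" "inj_on (part_of T) W"
    and outside: "\<And>w. w \<in> W \<Longrightarrow> part_of T w \<notin> {u, v}"
    and mixed: "\<And>w. w \<in> W \<Longrightarrow> mixed_nbr G (u \<union> v) w"
  shows "card W \<le> card (merge_red_nbrs T u v)"
proof -
  have "card W = card (part_of T ` W)"
    using W(2) by (rule card_image[symmetric])
  also have "\<dots> \<le> card (merge_red_nbrs T u v)"
  proof (rule card_mono)
    show "finite (merge_red_nbrs T u v)"
      using quotient_finite[OF quot] unfolding merge_red_nbrs_def by simp
    show "part_of T ` W \<subseteq> merge_red_nbrs T u v"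
      using part_of_in_merge_red_nbrs[OF quot u v] W(1) outside mixed by blast
  qed
  finally show ?thesis .
qed

lemma obtain_parts_split:
  assumes quot: "quotient_trigraph G T" and "S \<subseteq> verts G" "S \<noteq> {}" "\<not> (\<exists>P \<in> verts T. S \<subseteq> P)"
  obtains s1 s2 where "s1 \<in> S" "s2 \<in> S" "part_of T s1 \<noteq> part_of T s2"
proof -
  obtain s0 where s0: "s0 \<in> S" using assms(3) by blast
  then have "\<not> S \<subseteq> part_of T s0"
    using assms(2,4) part_of_in_verts[OF quot] by blast
  then obtain s where "s \<in> S" "s \<notin> part_of T s0" by blast
  then have "part_of T s \<noteq> part_of T s0"
    using assms(2) mem_part_of[OF quot] by blast
  with s0 \<open>s \<in> S\<close> show ?thesis using that by blast
qed

section \<open>The fence forces red degree five\<close>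

lemma mixed_nbr_fence_vertex:
  assumes fence: "contains_fence G a b" and "m < 12" "n < 12" "f < 12"
    and "fence_vertex a b m \<in> U" "fence_vertex a b n \<in> U"
    and "adj_idx m f \<or> adj_idx n f" "\<not> black_idx m f \<or> \<not> black_idx n f"
  shows "mixed_nbr G U (fence_vertex a b f)"
proof -
  note adj = fence_vertex_adj_iff[OF fence] and blk = fence_vertex_blk_iff[OF fence]
  have "\<exists>p \<in> U. {p, fence_vertex a b f} \<in> blk G \<union> red G"
    using assms(5-7) adj[OF assms(2,4)] adj[OF assms(3,4)] by blast
  moreover have "\<exists>p \<in> U. {p, fence_vertex a b f} \<notin> blk G"
    using assms(5,6,8) blk[OF assms(2,4)] blk[OF assms(3,4)] by blast
  ultimately show ?thesis unfolding mixed_nbr_def ..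
qed

context
  fixes G :: "'v trigraph" and T :: "'v set trigraph" and a b :: "nat \<Rightarrow> 'v" and S :: "'v set"
  assumes quot: "quotient_trigraph G T" and sep: "parts_separate (fenceV a b) S T"
    and fence: "contains_fence G a b" and att: "fence_attached G a b S"
begin

lemma fence_vertex_in_fenceV: "f < 12 \<Longrightarrow> fence_vertex a b f \<in> fenceV a b"
  by (simp add: fenceV_eq_image)

lemma fence_attached_in_verts: "fenceV a b \<union> S \<subseteq> verts G"
  using fence att unfolding contains_fence_def fence_attached_def by blast

lemma attached_notin_fenceV: "s \<in> S \<Longrightarrow> s \<notin> fenceV a b"
  using att unfolding fence_attached_def by blast

lemma part_of_neq_separated:
  assumes U: "U \<in> verts T" "x \<in> U" and xw: "x \<in> fenceV a b \<union> S" "w \<in> fenceV a b \<union> S"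
    "x \<in> fenceV a b \<or> w \<in> fenceV a b" "w \<noteq> x"
  shows "part_of T w \<noteq> U"
proof
  assume "part_of T w = U"
  then have "w \<in> U" using mem_part_of[OF quot] fence_attached_in_verts xw(2) by blast
  then show False
    using parts_separateD[OF sep U(1)] U(2) xw by blast
qed

lemma inj_on_part_of_fence:
  assumes "S' \<subseteq> S" "inj_on (part_of T) S'"
  shows "inj_on (part_of T) (fenceV a b \<union> S')"
proof (rule inj_onI)
  fix p q assume p: "p \<in> fenceV a b \<union> S'" and q: "q \<in> fenceV a b \<union> S'"
    and eq: "part_of T p = part_of T q"
  show "p = q"
  proof (cases "p \<in> S' \<and> q \<in> S'")
    case True
    then show ?thesis using assms(2) eq by (simp add: inj_on_eq_iff)
  next
    case False
    then show ?thesis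
      using part_of_neq_separated[OF part_of_in_verts[OF quot] mem_part_of[OF quot], of p q]
        fence_attached_in_verts p q eq assms(1) by blast
  qed
qed

lemma card_fence_witnesses_le_merge_red_nbrs:
  assumes u: "u \<in> verts T" and u': "u' \<in> verts T"
    and I: "I \<subseteq> {..<12}" and S': "finite S'" "S' \<subseteq> S" "inj_on (part_of T) S'"
    and wit: "\<And>w. w \<in> fence_vertex a b ` I \<union> S' \<Longrightarrow> part_of T w \<notin> {u, u'} \<and> mixed_nbr G (u \<union> u') w"
  shows "card I + card S' \<le> card (merge_red_nbrs T u u')"
proof -
  let ?W = "fence_vertex a b ` I \<union> S'"
  have I_fence: "fence_vertex a b ` I \<subseteq> fenceV a b"
    using I fence_vertex_in_fenceV by auto
  have "card I = card (fence_vertex a b ` I)"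
    using I by (intro card_image[symmetric] inj_on_subset[OF inj_on_fence_vertex[OF fence]]) auto
  also have "\<dots> + card S' = card ?W"
    using I S'(1,2) I_fence attached_notin_fenceV
    by (intro card_Un_disjoint[symmetric]) (auto intro: finite_subset)
  also have "\<dots> \<le> card (merge_red_nbrs T u u')"
  proof (rule card_le_merge_red_nbrs[OF quot u u'])
    show "?W \<subseteq> verts G"
      using I_fence S'(2) fence_attached_in_verts by blast
    have "inj_on (part_of T) (fenceV a b \<union> S')"
      using S'(2,3) by (rule inj_on_part_of_fence)
    then show "inj_on (part_of T) ?W"
      by (rule inj_on_subset) (use I_fence in auto)
  qed (use wit in blast)+
  finally show ?thesis .
qed

lemma five_le_merge_red_nbrs_fence_pair:
  assumes u: "u \<in> verts T" and u': "u' \<in> verts T" and "u \<noteq> u'"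
    and m: "m < 12" "fence_vertex a b m \<in> u" and n: "n < 12" "fence_vertex a b n \<in> u'"
    and s: "s1 \<in> S" "s2 \<in> S" "part_of T s1 \<noteq> part_of T s2"
  shows "5 \<le> card (merge_red_nbrs T u u')"
proof -
  let ?fv = "fence_vertex a b"
  define I where "I = {f. f < 12 \<and> f \<noteq> m \<and> f \<noteq> n
    \<and> (adj_idx m f \<or> adj_idx n f) \<and> (\<not> black_idx m f \<or> \<not> black_idx n f)}"
  have "u \<inter> u' = {}"
    using quotient_parts_disjoint[OF quot u u' \<open>u \<noteq> u'\<close>] .
  with m(2) n(2) have "m \<noteq> n" by auto
  have outside: "part_of T w \<notin> {u, u'}" if "w \<in> fenceV a b \<union> S" "w \<noteq> ?fv m" "w \<noteq> ?fv n" for w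
    using part_of_neq_separated[OF u m(2)] part_of_neq_separated[OF u' n(2)]
      fence_vertex_in_fenceV m(1) n(1) that by blast
  have I_wit: "part_of T (?fv f) \<notin> {u, u'} \<and> mixed_nbr G (u \<union> u') (?fv f)" if "f \<in> I" for f
  proof
    have "?fv f \<noteq> ?fv m" "?fv f \<noteq> ?fv n" "f < 12"
      using that inj_on_fence_vertex[OF fence] m(1) n(1) unfolding I_def inj_on_def by auto
    then show "part_of T (?fv f) \<notin> {u, u'}"
      using outside fence_vertex_in_fenceV by blast
    show "mixed_nbr G (u \<union> u') (?fv f)"
      using that m n by (intro mixed_nbr_fence_vertex[OF fence, of m n]) (auto simp: I_def)
  qed
  have I_bound: "(if (m < 6) = (n < 6) then 5 else 3) \<le> card I"
    using card_mixed_nbrs_idx_fence_pair[OF m(1) n(1) \<open>m \<noteq> n\<close>] by (simp add: I_def)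
  have I_idx: "I \<subseteq> {..<12}" by (auto simp: I_def)
  show ?thesis
  proof (cases "(m < 6) = (n < 6)")
    case True
    have "card I \<le> card (merge_red_nbrs T u u')"
      using card_fence_witnesses_le_merge_red_nbrs[OF u u' I_idx, of "{}"] I_wit by auto
    with True I_bound show ?thesis by simp
  next
    case False
    have s_wit: "part_of T s \<notin> {u, u'} \<and> mixed_nbr G (u \<union> u') s" if "s \<in> S" for s
    proof
      show "part_of T s \<notin> {u, u'}"
        using outside that attached_notin_fenceV fence_vertex_in_fenceV m(1) n(1) by blast
      have "{?fv m, s} \<in> blk G \<and> {?fv n, s} \<notin> blk G \<union> red G
          \<or> {?fv n, s} \<in> blk G \<and> {?fv m, s} \<notin> blk G \<union> red G"
        using False fence_vertex_blk_attached[OF att _ that] fence_vertex_not_adj_attached[OF att _ that]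
          m(1) n(1) by blast
      then show "mixed_nbr G (u \<union> u') s"
        unfolding mixed_nbr_def using m(2) n(2) by blast
    qed
    have "card I + card {s1, s2} \<le> card (merge_red_nbrs T u u')"
      using I_wit s_wit s by (intro card_fence_witnesses_le_merge_red_nbrs[OF u u' I_idx]) auto
    moreover have "card {s1, s2} = 2"
      using s(3) by (cases "s1 = s2") simp_all
    ultimately show ?thesis
      using False I_bound by simp
  qed
qed

lemma five_le_merge_red_nbrs_fence_attached:
  assumes u: "u \<in> verts T" and u': "u' \<in> verts T"
    and m: "m < 12" "fence_vertex a b m \<in> u" and y: "y \<in> u'" "y \<in> S"
  shows "5 \<le> card (merge_red_nbrs T u u')"
proof -
  let ?fv = "fence_vertex a b"
  define I where "I = {f. f < 12 \<and> f \<noteq> m \<and> (adj_idx m f \<or> f < 6) \<and> (\<not> black_idx m f \<or> \<not> f < 6)}"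
  have I_wit: "part_of T (?fv f) \<notin> {u, u'} \<and> mixed_nbr G (u \<union> u') (?fv f)" if "f \<in> I" for f
  proof
    have f: "f < 12" "?fv f \<noteq> ?fv m" "?fv f \<noteq> y"
      using that inj_on_fence_vertex[OF fence] m(1) y(2) attached_notin_fenceV fence_vertex_in_fenceV
      unfolding I_def inj_on_def by auto
    then show "part_of T (?fv f) \<notin> {u, u'}"
      using part_of_neq_separated[OF u m(2)] part_of_neq_separated[OF u' y(1)]
        fence_vertex_in_fenceV m(1) y(2) by blast
    have "{?fv m, ?fv f} \<in> blk G \<union> red G \<or> {y, ?fv f} \<in> blk G"
      using that fence_vertex_adj_iff[OF fence m(1) f(1)] fence_vertex_blk_attached[OF att f(1) y(2)]
      unfolding I_def by (auto simp: insert_commute)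
    moreover have "{?fv m, ?fv f} \<notin> blk G \<or> {y, ?fv f} \<notin> blk G"
      using that fence_vertex_blk_iff[OF fence m(1) f(1)] fence_vertex_not_adj_attached[OF att f(1) y(2)]
      unfolding I_def by (auto simp: insert_commute)
    ultimately show "mixed_nbr G (u \<union> u') (?fv f)"
      unfolding mixed_nbr_def using m(2) y(1) by blast
  qed
  have "I \<subseteq> {..<12}" by (auto simp: I_def)
  then have "card I \<le> card (merge_red_nbrs T u u')"
    using card_fence_witnesses_le_merge_red_nbrs[OF u u', of I "{}"] I_wit by auto
  moreover have "5 \<le> card I"
    using card_mixed_nbrs_idx_fence_attached[OF m(1)] by (simp add: I_def)
  ultimately show ?thesis by simp
qed

lemma five_le_merge_red_nbrs_fence_one_side:
  assumes u: "u \<in> verts T" and u': "u' \<in> verts T" and "u \<noteq> u'"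
    and xy: "x \<in> u" "y \<in> u'" "x \<in> fenceV a b" "y \<in> fenceV a b \<union> S"
    and s: "s1 \<in> S" "s2 \<in> S" "part_of T s1 \<noteq> part_of T s2"
  shows "5 \<le> card (merge_red_nbrs T u u')"
proof -
  obtain m where m: "m < 12" "x = fence_vertex a b m"
    using xy(3) unfolding fenceV_eq_image by auto
  show ?thesis
  proof (cases "y \<in> fenceV a b")
    case True
    then obtain n where "n < 12" "y = fence_vertex a b n"
      unfolding fenceV_eq_image by auto
    then show ?thesis
      using five_le_merge_red_nbrs_fence_pair[OF u u' \<open>u \<noteq> u'\<close>] m xy s by blast
  next
    case False
    then show ?thesis
      using five_le_merge_red_nbrs_fence_attached[OF u u'] m xy by blast
  qed
qed

lemma five_le_merge_red_nbrs_fence: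
  assumes u: "u \<in> verts T" "u' \<in> verts T" "u \<noteq> u'"
    and xy: "involves (u, u') x y" "x \<in> fenceV a b" "y \<in> fenceV a b \<union> S"
    and s: "s1 \<in> S" "s2 \<in> S" "part_of T s1 \<noteq> part_of T s2"
  shows "5 \<le> card (merge_red_nbrs T u u')"
proof -
  consider "x \<in> u" "y \<in> u'" | "x \<in> u'" "y \<in> u"
    using xy(1) unfolding involves_def by auto
  then show ?thesis
  proof cases
    case 1
    then show ?thesis
      using five_le_merge_red_nbrs_fence_one_side[OF u] xy(2,3) s by blast
  next
    case 2
    then have "5 \<le> card (merge_red_nbrs T u' u)"
      using five_le_merge_red_nbrs_fence_one_side[OF u(2,1) u(3)[symmetric]] xy(2,3) s by blast
    then show ?thesis by (simp add: merge_red_nbrs_commute)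
  qed
qed

end

theorem lemma4p8:
  fixes G :: "'v trigraph" and a b :: "nat \<Rightarrow> 'v" and S :: "'v set"
    and ps :: "('v set \<times> 'v set) list" and i :: nat
  assumes "wf_trigraph G"
    and "contains_fence G a b"
    and "fence_attached G a b S"
    and "attachment_rule G a b S"
    and "partial_seq 4 G ps"
    and "i < length ps"
    and "\<exists>x \<in> fenceV a b. \<exists>y \<in> fenceV a b \<union> S. involves (ps ! i) x y"
    and "\<forall>j < i. \<not> (\<exists>x \<in> fenceV a b. \<exists>y \<in> fenceV a b \<union> S. involves (ps ! j) x y)"
  shows "\<exists>P \<in> verts (run G (take i ps)). S \<subseteq> P"
proof (rule ccontr)
  define T where "T = run G (take i ps)"
  assume "\<not> (\<exists>P \<in> verts (run G (take i ps)). S \<subseteq> P)"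
  moreover have quot: "quotient_trigraph G T"
    unfolding T_def using quotient_run[OF assms(1,5)] assms(6) by simp
  moreover have "S \<subseteq> verts G" "S \<noteq> {}"
    using assms(3) unfolding fence_attached_def by auto
  ultimately obtain s1 s2 where s: "s1 \<in> S" "s2 \<in> S" "part_of T s1 \<noteq> part_of T s2"
    using obtain_parts_split unfolding T_def by metis
  obtain u u' where ps_i: "ps ! i = (u, u')" by fastforce
  have sep: "parts_separate (fenceV a b) S T"
    unfolding T_def using parts_separate_run[OF assms(5) _ assms(6,8)] by simp
  have u: "u \<in> verts T" "u' \<in> verts T" "u \<noteq> u'"
    unfolding T_def using partial_seq_contracted[OF assms(5,6)] ps_i by simp_all
  obtain x y where "involves (u, u') x y" "x \<in> fenceV a b" "y \<in> fenceV a b \<union> S"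
    using assms(7) ps_i by auto
  then have "5 \<le> card (merge_red_nbrs T u u')"
    using five_le_merge_red_nbrs_fence[OF quot sep assms(2,3) u] s by blast
  moreover have "card (merge_red_nbrs T u u') \<le> 4"
    unfolding T_def using card_merge_red_nbrs_le_of_partial_seq[OF assms(5,6) ps_i]
      quotient_finite[OF quot[unfolded T_def]] by blast
  ultimately show False by simp
qed

end
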